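(* Let $m\geq1$ be an odd integer and $n>1$ an integer such that $\mathcal{A}_{m,n}:=m2^n-1$ is prime. Let $t\in\mathbb{F}_{\mathcal{A}_{m,n}}$ be such that $t^2+1$ is not a square in $\mathbb{F}_{\mathcal{A}_{m,n}}$, and let $E_t/\mathbb{F}_{\mathcal{A}_{m,n}}$ be the elliptic curve $y^2=x^3-(t^2+1)x$. Then the point $m\cdot(-1,t)$ generates the $2$-Sylow subgroup of $E_t(\mathbb{F}_{\mathcal{A}_{m,n}})$. *)

theory Defs
  imports Main "HOL-Computational_Algebra.Primes" "HOL-Library.Cardinality"
begin

datatype 'a ecpoint = Infty | Aff 'a 'a

definition on_curve :: "'a::field \<Rightarrow> 'a \<Rightarrow> 'a ecpoint \<Rightarrow> bool" where
  "on_curve a b P = (case P of Infty \<Rightarrow> True | Aff x y \<Rightarrow> y^2 = x^3 + a*x + b)"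

definition curve_points :: "'a::field \<Rightarrow> 'a \<Rightarrow> 'a ecpoint set" where
  "curve_points a b = {P. on_curve a b P}"

text \<open>The standard chord-tangent group law (characteristic not 2).\<close>
fun ec_add :: "'a::field \<Rightarrow> 'a ecpoint \<Rightarrow> 'a ecpoint \<Rightarrow> 'a ecpoint" where
  "ec_add a Infty Q = Q"
| "ec_add a (Aff x1 y1) Infty = Aff x1 y1"
| "ec_add a (Aff x1 y1) (Aff x2 y2) =
     (if x1 = x2 then
        (if y1 = - y2 then Infty
         else (let l = (3 * x1^2 + a) / (2 * y1); x3 = l^2 - 2 * x1
               in Aff x3 (l * (x1 - x3) - y1)))
      else (let l = (y2 - y1) / (x2 - x1); x3 = l^2 - x1 - x2
            in Aff x3 (l * (x1 - x3) - y1)))"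

fun ec_smult :: "'a::field \<Rightarrow> nat \<Rightarrow> 'a ecpoint \<Rightarrow> 'a ecpoint" where
  "ec_smult a 0 P = Infty"
| "ec_smult a (Suc k) P = ec_add a P (ec_smult a k P)"

definition two_sylow :: "'a::field \<Rightarrow> 'a \<Rightarrow> 'a ecpoint set" where
  "two_sylow a b = {P \<in> curve_points a b. \<exists>e. ec_smult a (2^e) P = Infty}"

text \<open>Cyclic subgroup generated by a point (finite group, so nonnegative multiples suffice).\<close>
definition ec_cyclic :: "'a::field \<Rightarrow> 'a ecpoint \<Rightarrow> 'a ecpoint set" where
  "ec_cyclic a P = range (\<lambda>k. ec_smult a k P)"

end

theory Submission
  imports Defs "HOL-Number_Theory.Residues"
begin

(* Since q = m 2^n - 1 is 3 mod 4, -1 is not a square in F_q; as t^2 + 1 is not a square,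
   -(t^2 + 1) = s^2 is one, and E_t is y^2 = x^3 + s^2 x.  This curve is isomorphic to the
   Edwards curve x^2 + y^2 = 1 - x^2 y^2, whose addition law is complete because -1 is not a
   square; transporting associativity along the isomorphism makes E_t a group.  Since
   x^3 + s^2 x is odd in x, pairing x with -x shows |E_t| = q + 1 = m 2^n, so Q = m (-1, t)
   has 2-power order.  The x-coordinate of a double is a square, so (-1, t) is not a double,
   nor is its odd multiple Q; and (0, 0) is the only point of order 2.  In an abelian group
   with a unique involution, a non-square of 2-power order generates every element of
   2-power order. *)

lemma nonsquare_minus_one_imp_two_neq_zero:
  assumes "\<nexists>z::'a::field. z^2 = -1"
  shows "(2::'a) \<noteq> 0"
proof
  assume "(2::'a) = 0"
  then have "(1::'a)^2 = -1" by (simp add: eq_neg_iff_add_eq_0)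
  with assms show False by blast
qed

lemma sum_of_squares_eq_zero_iff:
  fixes a b :: "'a::field"
  assumes "\<nexists>z::'a. z^2 = -1"
  shows "a^2 + b^2 = 0 \<longleftrightarrow> a = 0 \<and> b = 0"
proof
  assume sum: "a^2 + b^2 = 0"
  have "b = 0"
  proof (rule ccontr)
    assume "b \<noteq> 0"
    moreover from sum have "a^2 = -(b^2)" by (simp add: eq_neg_iff_add_eq_0)
    ultimately have "(a/b)^2 = -1" by (simp add: power_divide)
    with assms show False by blast
  qed
  with sum show "a = 0 \<and> b = 0" by simp
qed simp

lemma card_square_roots:
  fixes w :: "'a::field"
  assumes "(2::'a) \<noteq> 0"
  shows "card {y. y^2 = w^2} = (if w = 0 then 1 else 2)"
proof -
  have "{y. y^2 = w^2} = {w, -w}" by (auto simp: power2_eq_iff)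
  moreover have "w \<noteq> -w" if "w \<noteq> 0"
    using assms that by (auto simp: eq_neg_iff_add_eq_0 simp flip: mult_2)
  ultimately show ?thesis by auto
qed

section \<open>An Edwards curve with complete addition law\<close>

(* The Edwards curve x^2 + y^2 = 1 + d x^2 y^2 with d = -1. *)
fun on_edwards :: "'a::field \<times> 'a \<Rightarrow> bool" where
  "on_edwards (x, y) \<longleftrightarrow> x^2 + y^2 + x^2*y^2 = 1"

fun edwards_add :: "'a::field \<times> 'a \<Rightarrow> 'a \<times> 'a \<Rightarrow> 'a \<times> 'a" where
  "edwards_add (x1, y1) (x2, y2) =
     ((x1*y2 + y1*x2) / (1 - x1*x2*y1*y2), (y1*y2 - x1*x2) / (1 + x1*x2*y1*y2))"

lemma edwards_denominators_nonzero:
  fixes x1 y1 x2 y2 :: "'a::field"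
  assumes nsq: "\<nexists>z::'a. z^2 = -1"
    and p: "on_edwards (x1, y1)" and q: "on_edwards (x2, y2)"
  shows "1 - x1*x2*y1*y2 \<noteq> 0" and "1 + x1*x2*y1*y2 \<noteq> 0"
proof -
  have False if eps: "eps^2 = 1" and u: "x1*x2*y1*y2 = eps" for eps
  proof -
    have nz: "x1*y1 \<noteq> 0" using u eps by auto
    have "(x1 - eps*y1)^2 + (x1*y1*(x2 + y2))^2 = 0"
      using p q u eps unfolding on_edwards.simps by Groebner_Basis.algebra
    moreover have "(x1 + eps*y1)^2 + (x1*y1*(x2 - y2))^2 = 0"
      using p q u eps unfolding on_edwards.simps by Groebner_Basis.algebra
    ultimately have "x1*y1*(x2 + y2) = 0" "x1*y1*(x2 - y2) = 0"
      using sum_of_squares_eq_zero_iff[OF nsq] by blast+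
    then have "x2 + y2 = 0" "x2 - y2 = 0"
      using nz by simp_all
    then show False
      using u eps nonsquare_minus_one_imp_two_neq_zero[OF nsq] by auto
  qed
  from this[of 1] this[of "-1"] show "1 - x1*x2*y1*y2 \<noteq> 0" "1 + x1*x2*y1*y2 \<noteq> 0"
    by (auto simp: eq_neg_iff_add_eq_0 add.commute)
qed

lemma on_edwards_add:
  fixes p q :: "'a::field \<times> 'a"
  assumes nsq: "\<nexists>z::'a. z^2 = -1" and "on_edwards p" and "on_edwards q"
  shows "on_edwards (edwards_add p q)"
proof -
  obtain x1 y1 x2 y2 :: 'a where pq: "p = (x1, y1)" "q = (x2, y2)" by fastforce
  note den = edwards_denominators_nonzero[OF nsq assms(2-3)[unfolded pq]]
  show ?thesis
    using assms(2-3) den unfolding pq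
    by (simp add: field_simps) Groebner_Basis.algebra
qed

lemma edwards_add_neutral: "edwards_add (0, 1) p = p" "edwards_add p (0, 1) = p"
  by (cases p; simp)+

lemma edwards_add_commute: "edwards_add p q = edwards_add q p"
  by (cases p; cases q) (simp add: algebra_simps)

lemma edwards_add_neg:
  fixes x y :: "'a::field"
  assumes nsq: "\<nexists>z::'a. z^2 = -1" and on: "on_edwards (x, y)"
  shows "edwards_add (x, y) (-x, y) = (0, 1)"
proof -
  have "on_edwards (-x, y)" using on by simp
  from edwards_denominators_nonzero(2)[OF nsq on this] on show ?thesis
    by (simp add: power2_eq_square algebra_simps)
qed

(* No hypothesis on the new denominators is needed: if one vanishes, both sides divide by 0. *)
lemma edwards_add_fractions:
  fixes a b c d e f g h :: "'a::field"
  assumes "b*d*f*h \<noteq> 0"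
  shows "edwards_add (a/b, c/d) (e/f, g/h) =
    ((a*g*d*f + c*e*b*h) / (b*d*f*h - a*c*e*g), (c*g*b*f - a*e*d*h) / (b*d*f*h + a*c*e*g))"
proof -
  have *: "N / Q / (M / Q) = N / M" if "Q \<noteq> 0" for N M Q :: 'a
    using that by simp
  have "edwards_add (a/b, c/d) (e/f, g/h) =
    (((a*g*d*f + c*e*b*h) / (b*d*f*h)) / ((b*d*f*h - a*c*e*g) / (b*d*f*h)),
     ((c*g*b*f - a*e*d*h) / (b*d*f*h)) / ((b*d*f*h + a*c*e*g) / (b*d*f*h)))"
    using assms(1) by (simp add: field_simps)
  then show ?thesis using assms by (simp only: *) simp
qed

lemma edwards_denominators_nonzero_fractions:
  fixes a b c d e f g h :: "'a::field"
  assumes nsq: "\<nexists>z::'a. z^2 = -1" and "b*d*f*h \<noteq> 0"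
    and "on_edwards (a/b, c/d)" and "on_edwards (e/f, g/h)"
  shows "b*d*f*h - a*c*e*g \<noteq> 0" and "b*d*f*h + a*c*e*g \<noteq> 0"
proof -
  have "1 - (a/b)*(e/f)*(c/d)*(g/h) = (b*d*f*h - a*c*e*g) / (b*d*f*h)"
    and "1 + (a/b)*(e/f)*(c/d)*(g/h) = (b*d*f*h + a*c*e*g) / (b*d*f*h)"
    using assms(2) by (simp_all add: field_simps)
  with edwards_denominators_nonzero[OF assms(1,3,4)] show
    "b*d*f*h - a*c*e*g \<noteq> 0" "b*d*f*h + a*c*e*g \<noteq> 0"
    by auto
qed

lemma edwards_add_assoc:
  fixes p q r :: "'a::field \<times> 'a"
  assumes nsq: "\<nexists>z::'a. z^2 = -1"
    and on_p: "on_edwards p" and on_q: "on_edwards q" and on_r: "on_edwards r"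
  shows "edwards_add (edwards_add p q) r = edwards_add p (edwards_add q r)"
proof -
  obtain x1 y1 x2 y2 x3 y3 :: 'a where pqr: "p = (x1, y1)" "q = (x2, y2)" "r = (x3, y3)"
    by fastforce
  define a where "a = x1*y2 + y1*x2"
  define b where "b = 1 - x1*x2*y1*y2"
  define c where "c = y1*y2 - x1*x2"
  define e where "e = 1 + x1*x2*y1*y2"
  define a' where "a' = x2*y3 + y2*x3"
  define b' where "b' = 1 - x2*x3*y2*y3"
  define c' where "c' = y2*y3 - x2*x3"
  define e' where "e' = 1 + x2*x3*y2*y3"
  have pq: "edwards_add p q = (a/b, c/e)" and qr: "edwards_add q r = (a'/b', c'/e')"
    by (simp_all add: pqr a_def b_def c_def e_def a'_def b'_def c'_def e'_def)
  have b: "b \<noteq> 0" and e: "e \<noteq> 0"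
    using edwards_denominators_nonzero[OF nsq on_p[unfolded pqr] on_q[unfolded pqr]]
    by (simp_all add: b_def e_def)
  have b': "b' \<noteq> 0" and e': "e' \<noteq> 0"
    using edwards_denominators_nonzero[OF nsq on_q[unfolded pqr] on_r[unfolded pqr]]
    by (simp_all add: b'_def e'_def)
  have "on_edwards (a/b, c/e)"
    using on_edwards_add[OF nsq on_p on_q] by (simp only: pq)
  from edwards_denominators_nonzero[OF nsq this on_r[unfolded pqr]]
  have left_den: "b*e - a*c*x3*y3 \<noteq> 0" "b*e + a*c*x3*y3 \<noteq> 0"
    using b e by (simp_all add: field_simps)
  have "on_edwards (a'/b', c'/e')"
    using on_edwards_add[OF nsq on_q on_r] by (simp only: qr)
  from edwards_denominators_nonzero[OF nsq on_p[unfolded pqr] this]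
  have right_den: "b'*e' - x1*y1*a'*c' \<noteq> 0" "b'*e' + x1*y1*a'*c' \<noteq> 0"
    using b' e' by (simp_all add: field_simps)
  note defs = a_def b_def c_def e_def a'_def b'_def c'_def e'_def
  have cross_x: "(a*e*y3 + c*b*x3) * (b'*e' - x1*y1*a'*c') =
      (x1*c'*b' + y1*a'*e') * (b*e - a*c*x3*y3)"
    using on_p on_q on_r unfolding pqr on_edwards.simps defs by Groebner_Basis.algebra
  have cross_y: "(c*b*y3 - a*e*x3) * (b'*e' + x1*y1*a'*c') =
      (y1*c'*b' - x1*a'*e') * (b*e + a*c*x3*y3)"
    using on_p on_q on_r unfolding pqr on_edwards.simps defs by Groebner_Basis.algebra
  have "edwards_add (edwards_add p q) r = edwards_add (a/b, c/e) (x3/1, y3/1)"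
    by (simp only: pq pqr(3) div_by_1)
  also have "\<dots> =
    ((a*e*y3 + c*b*x3) / (b*e - a*c*x3*y3), (c*b*y3 - a*e*x3) / (b*e + a*c*x3*y3))"
    using edwards_add_fractions[of b e 1 1 a c x3 y3] b e
    by (simp del: edwards_add.simps add: ac_simps)
  also have "\<dots> = ((x1*c'*b' + y1*a'*e') / (b'*e' - x1*y1*a'*c'),
                   (y1*c'*b' - x1*a'*e') / (b'*e' + x1*y1*a'*c'))"
    using left_den right_den cross_x cross_y by (simp add: frac_eq_eq)
  also have "\<dots> = edwards_add (x1/1, y1/1) (a'/b', c'/e')"
    using edwards_add_fractions[of 1 1 b' e' x1 y1 a' c'] b' e'
    by (simp del: edwards_add.simps add: ac_simps)
  also have "\<dots> = edwards_add p (edwards_add q r)"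
    by (simp only: qr pqr(1) div_by_1)
  finally show ?thesis .
qed

lemma on_curve_Aff: "on_curve a b (Aff x y) \<longleftrightarrow> y^2 = x^3 + a*x + b"
  by (simp add: on_curve_def)

lemma on_curve_same_x:
  assumes "on_curve a b (Aff x y1)" and "on_curve a b (Aff x y2)"
  shows "y2 = y1 \<or> y2 = -y1"
proof -
  have "(y2 - y1) * (y2 + y1) = 0"
    using assms by (simp add: on_curve_Aff algebra_simps power2_eq_square)
  then show ?thesis by (auto simp: eq_neg_iff_add_eq_0)
qed

lemma ec_add_Aff_double:
  fixes a x y :: "'a::field"
  assumes "(2::'a) \<noteq> 0" and "y \<noteq> 0"
  shows "ec_add a (Aff x y) (Aff x y) =
    (let l = (3*x^2 + a) / (2*y); x' = l^2 - 2*x in Aff x' (l*(x - x') - y))"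
proof -
  have "y \<noteq> -y" using assms by (auto simp: eq_neg_iff_add_eq_0 simp flip: mult_2)
  then show ?thesis by simp
qed

lemma on_curve_ec_add:
  fixes a b :: "'a::field"
  assumes two: "(2::'a) \<noteq> 0" and P: "on_curve a b P" and Q: "on_curve a b Q"
  shows "on_curve a b (ec_add a P Q)"
proof (cases P; cases Q)
  fix x1 y1 x2 y2 assume PQ: "P = Aff x1 y1" "Q = Aff x2 y2"
  have h1: "y1^2 = x1^3 + a*x1 + b" and h2: "y2^2 = x2^3 + a*x2 + b"
    using P Q by (simp_all add: PQ on_curve_Aff)
  consider "x1 \<noteq> x2" | "x1 = x2" "y2 = -y1" | "x2 = x1" "y2 = y1" "y1 \<noteq> 0"
    using on_curve_same_x[of a b x1 y1 y2] P Q PQ by fastforce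
  then show ?thesis
  proof cases
    case 1
    define l where "l = (y2 - y1) / (x2 - x1)"
    have "l * (x2 - x1) = y2 - y1" using 1 by (simp add: l_def)
    then show ?thesis using 1 h1 h2
      by (simp add: PQ on_curve_Aff Let_def flip: l_def) Groebner_Basis.algebra
  next
    case 2
    then show ?thesis by (simp add: PQ on_curve_def)
  next
    case 3
    define l where "l = (3*x1^2 + a) / (2*y1)"
    have "l * (2*y1) = 3*x1^2 + a" using 3 two by (simp add: l_def)
    then show ?thesis using 3 h1 two
      by (simp add: PQ ec_add_Aff_double[OF two] on_curve_Aff Let_def flip: l_def)
        Groebner_Basis.algebra
  qed
qed (use P Q in simp_all)

lemma ec_add_self_x_square:
  fixes a :: "'a::field"
  assumes two: "(2::'a) \<noteq> 0" and V: "on_curve a 0 V" and VV: "ec_add a V V = Aff x y"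
  shows "\<exists>z. x = z^2"
proof (cases V)
  case Infty
  with VV show ?thesis by simp
next
  case (Aff x1 y1)
  have y1: "y1 \<noteq> 0" using VV Aff by auto
  have "(2*y1)^2 = 4 * (x1^3 + a*x1)"
    using V Aff by (simp add: on_curve_Aff power_mult_distrib)
  then have "(3*x1^2 + a)^2 - 2*x1*(2*y1)^2 = (x1^2 - a)^2"
    by (simp add: algebra_simps power2_eq_square power3_eq_cube)
  moreover have "(2*y1)^2 \<noteq> 0" using two y1 by (intro power_not_zero) simp
  ultimately have "((3*x1^2 + a) / (2*y1))^2 - 2*x1 = ((x1^2 - a) / (2*y1))^2"
    by (simp add: power_divide divide_diff_eq_iff)
  moreover have "x = ((3*x1^2 + a) / (2*y1))^2 - 2*x1"
    using VV Aff two y1 by (simp add: Let_def)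
  ultimately show ?thesis by blast
qed

lemma ec_add_self_eq_Infty:
  fixes a :: "'a::field"
  assumes two: "(2::'a) \<noteq> 0" and nsq: "\<nexists>z. z^2 = -a"
    and R: "on_curve a 0 R" and RR: "ec_add a R R = Infty"
  shows "R = Infty \<or> R = Aff 0 0"
proof (cases R)
  case (Aff x y)
  have "y = 0"
  proof (rule ccontr)
    assume "y \<noteq> 0"
    with RR Aff two show False by (simp add: ec_add_Aff_double[OF two] Let_def)
  qed
  then have "x * (x^2 + a) = 0"
    using R Aff by (simp add: on_curve_Aff algebra_simps power2_eq_square power3_eq_cube)
  moreover have "x^2 + a \<noteq> 0"
    using nsq by (metis add.commute add_eq_0_iff)
  ultimately show ?thesis using Aff \<open>y = 0\<close> by simp
qed simp

definition ec_group :: "'a::field \<Rightarrow> 'a \<Rightarrow> 'a ecpoint monoid" where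
  "ec_group a b = \<lparr>carrier = curve_points a b, mult = ec_add a, one = Infty\<rparr>"

lemma ec_smult_eq_nat_pow:
  assumes "monoid (ec_group a b)" and "P \<in> carrier (ec_group a b)"
  shows "ec_smult a k P = P [^]\<^bsub>ec_group a b\<^esub> k"
proof (induction k)
  case (Suc k)
  have "P [^]\<^bsub>ec_group a b\<^esub> Suc k = P \<otimes>\<^bsub>ec_group a b\<^esub> P [^]\<^bsub>ec_group a b\<^esub> k"
    using assms by (rule monoid.nat_pow_Suc2)
  with Suc show ?case by (simp add: ec_group_def)
qed (simp add: ec_group_def)

section \<open>Finite fields and the number of points\<close>

lemma of_nat_CARD_eq_0: "of_nat CARD('a::{finite,field}) = (0::'a)"
  by (simp add: of_nat_eq_0_iff_char_dvd CHAR_dvd_CARD)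

lemma power_CARD_minus_one_eq_1:
  fixes x :: "'a::{finite,field}"
  assumes "x \<noteq> 0"
  shows "x ^ (CARD('a) - 1) = 1"
proof -
  let ?U = "UNIV - {0::'a}"
  have "(\<Prod>y\<in>?U. x * y) = (\<Prod>y\<in>?U. y)"
    by (rule prod.reindex_bij_witness[of _ "\<lambda>y. y / x" "\<lambda>y. x * y"]) (use assms in auto)
  then have "x ^ card ?U * (\<Prod>y\<in>?U. y) = (\<Prod>y\<in>?U. y)"
    by (simp add: prod.distrib)
  then show ?thesis by (simp add: card_Diff_singleton)
qed

lemma minus_one_not_square_if_CARD_mod_4:
  assumes "CARD('a::{finite,field}) mod 4 = 3"
  shows "\<nexists>z::'a. z^2 = -1"
proof
  assume "\<exists>z::'a. z^2 = -1"
  then obtain z :: 'a where z: "z^2 = -1" by blast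
  obtain j where j: "CARD('a) = 4*j + 3" using assms by (metis div_mod_decomp mult.commute)
  have "(2::'a) \<noteq> 0"
  proof
    assume two: "(2::'a) = 0"
    have "(of_nat CARD('a) :: 'a) = 2 * (2 * of_nat j + 1) + 1"
      by (simp add: j algebra_simps)
    then show False using two of_nat_CARD_eq_0[where 'a='a] by simp
  qed
  have "CARD('a) - 1 = 2 * (2*j + 1)" using j by simp
  then have "(-1::'a) ^ (2*j + 1) = z ^ (CARD('a) - 1)"
    by (simp only: power_mult flip: z)
  also have "\<dots> = 1"
    using z power_CARD_minus_one_eq_1[of z] by force
  finally show False using \<open>(2::'a) \<noteq> 0\<close> by (simp add: eq_neg_iff_add_eq_0)
qed

lemma square_or_neg_square:
  fixes c :: "'a::{finite,field}"
  assumes nsq: "\<nexists>z::'a. z^2 = -1"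
  shows "(\<exists>z. z^2 = c) \<or> (\<exists>z. z^2 = -c)"
proof -
  let ?U = "UNIV - {0::'a}"
  let ?Sq = "(\<lambda>z. z^2) ` ?U"
  have disjoint: "?Sq \<inter> uminus ` ?Sq = {}"
    using sum_of_squares_eq_zero_iff[OF nsq] by (auto simp: eq_neg_iff_add_eq_0)
  have fibre: "card {z. z^2 = w^2} \<le> 2" for w :: 'a
  proof -
    have "{z. z^2 = w^2} \<subseteq> {w, -w}"
      by (auto simp: power2_eq_iff)
    then have "card {z. z^2 = w^2} \<le> card {w, -w}" by (intro card_mono) simp
    also have "\<dots> \<le> 2" by (simp add: card_insert_if)
    finally show ?thesis .
  qed
  have "card ?U \<le> card (\<Union>q\<in>?Sq. {z. z^2 = q})" by (intro card_mono) auto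
  also have "\<dots> \<le> (\<Sum>q\<in>?Sq. card {z. z^2 = q})" by (rule card_UN_le) simp
  also have "\<dots> \<le> (\<Sum>q\<in>?Sq. 2)" by (intro sum_mono) (auto intro: fibre)
  also have "\<dots> = card (?Sq \<union> uminus ` ?Sq)"
    using disjoint by (simp add: card_Un_disjoint card_image)
  finally have "?Sq \<union> uminus ` ?Sq = ?U" by (intro card_seteq) auto
  then have "c = 0 \<or> c \<in> ?Sq \<union> uminus ` ?Sq" by blast
  then show ?thesis by (auto simp: minus_equation_iff[of c])
qed

lemma card_square_roots_add_neg:
  fixes c :: "'a::{finite,field}"
  assumes nsq: "\<nexists>z::'a. z^2 = -1"
  shows "card {y. y^2 = c} + card {y. y^2 = -c} = 2"
proof -
  note two = nonsquare_minus_one_imp_two_neq_zero[OF nsq]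
  have no_roots: "{y. y^2 = -(w^2)} = {}" if "w \<noteq> 0" for w :: 'a
    using that sum_of_squares_eq_zero_iff[OF nsq] by (auto simp: eq_neg_iff_add_eq_0)
  obtain w where "c = w^2 \<or> c = -(w^2)"
    using square_or_neg_square[OF nsq, of c] by (metis minus_minus)
  then show ?thesis
    using card_square_roots[OF two, of w] no_roots[of w] by (cases "w = 0") auto
qed

lemma card_curve_points:
  fixes a :: "'a::{finite,field}"
  assumes nsq: "\<nexists>z::'a. z^2 = -1"
  shows "card (curve_points a 0) = CARD('a) + 1"
proof -
  define f where "f x = x^3 + a*x" for x :: 'a
  define roots where "roots c = {y::'a. y^2 = c}" for c
  \<comment> \<open>f is odd, so averaging over x and -x gives one square root of f x per x.\<close>
  have "(\<Sum>x\<in>UNIV. card (roots (f x))) = (\<Sum>x\<in>UNIV. card (roots (f (-x))))"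
    by (rule sum.reindex_bij_witness[of _ uminus uminus]) auto
  then have "2 * (\<Sum>x\<in>UNIV. card (roots (f x))) =
      (\<Sum>x\<in>UNIV. card (roots (f x)) + card (roots (- f x)))"
    by (simp add: sum.distrib f_def)
  also have "\<dots> = 2 * CARD('a)"
    using card_square_roots_add_neg[OF nsq] by (simp add: roots_def)
  finally have sum_roots: "(\<Sum>x\<in>UNIV. card (roots (f x))) = CARD('a)" by simp
  let ?affine = "(\<lambda>(x, y). Aff x y) ` (SIGMA x:UNIV. roots (f x))"
  have "curve_points a 0 = insert Infty ?affine"
  proof (rule Set.set_eqI)
    show "P \<in> curve_points a 0 \<longleftrightarrow> P \<in> insert Infty ?affine" for P
      by (cases P) (auto simp: curve_points_def on_curve_def f_def roots_def)
  qed
  moreover have "card ?affine = CARD('a)"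
    using sum_roots by (subst card_image) (auto simp: inj_on_def)
  moreover have "Infty \<notin> ?affine" by auto
  ultimately show ?thesis by simp
qed

section \<open>Abelian groups with a unique involution\<close>

lemma (in group) nat_pow_cong:
  assumes x: "x \<in> carrier G" and "x [^] (N::nat) = \<one>" and "[a = b] (mod N)"
  shows "x [^] a = x [^] b"
proof -
  have "ord x dvd N" using assms(1,2) by (simp add: pow_eq_id)
  with assms(3) have "[int a = int b] (mod int (ord x))"
    by (simp add: cong_int_iff cong_dvd_modulus_nat)
  then have "x [^] int a = x [^] int b"
    using x by (simp add: int_pow_eq cong_iff_dvd_diff dvd_diff_commute)
  then show ?thesis by (simp add: int_pow_int)
qed

lemma (in group) involution_in_two_power_powers:
  assumes Q: "Q \<in> carrier G" and "Q [^] (2::nat)^n = \<one>" and "Q \<noteq> \<one>"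
  shows "\<exists>i::nat. Q [^] i \<noteq> \<one> \<and> Q [^] i \<otimes> Q [^] i = \<one>"
proof -
  obtain k where ord_Q: "ord Q = 2^k"
    using assms(1,2) divides_primepow_nat[of 2 "ord Q" n] by (auto simp: pow_eq_id)
  have "k \<noteq> 0"
    using assms(3) ord_Q ord_eq_1[OF Q] by force
  have "Q [^] (2::nat)^(k - 1) \<noteq> \<one>"
    using Q \<open>k \<noteq> 0\<close> by (auto simp: pow_eq_id ord_Q dest: power_dvd_imp_le)
  moreover have "Q [^] (2::nat)^(k - 1) \<otimes> Q [^] (2::nat)^(k - 1) = \<one>"
    using Q pow_ord_eq_1[OF Q] \<open>k \<noteq> 0\<close> by (simp add: nat_pow_mult ord_Q flip: mult_2 power_Suc)
  ultimately show ?thesis by blast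
qed

(* By induction on e, R \<otimes> R = Q [^] c.  An odd c would make Q a square; for c = 2 d,
   R \<otimes> inv (Q [^] d) is an involution, hence \<one> or T, and T is a power of Q. *)
lemma (in comm_group) two_power_element_in_powers:
  assumes Q: "Q \<in> carrier G" and Qn: "Q [^] (2::nat)^n = \<one>"
    and not_square: "\<forall>R\<in>carrier G. R \<otimes> R \<noteq> Q"
    and unique_involution: "\<forall>R\<in>carrier G. R \<otimes> R = \<one> \<longrightarrow> R = \<one> \<or> R = T"
    and R: "R \<in> carrier G" and "R [^] (2::nat)^e = \<one>"
  shows "\<exists>j::nat. R = Q [^] j"
proof -
  have "Q \<noteq> \<one>" using not_square by force
  then obtain i :: nat where "Q [^] i \<noteq> \<one>" and "Q [^] i \<otimes> Q [^] i = \<one>"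
    using involution_in_two_power_powers[OF Q Qn] by blast
  with unique_involution Q have T: "T = Q [^] i" by auto
  show ?thesis
    using R \<open>R [^] (2::nat)^e = \<one>\<close>
  proof (induction e arbitrary: R)
    case 0
    then show ?case by (intro exI[of _ 0]) simp
  next
    case (Suc e)
    have "(R \<otimes> R) [^] (2::nat)^e = \<one>"
      using Suc.prems by (simp add: nat_pow_distrib nat_pow_mult flip: mult_2 power_Suc)
    moreover have "R \<otimes> R \<in> carrier G" using Suc.prems(1) by simp
    ultimately obtain c :: nat where c: "R \<otimes> R = Q [^] c"
      using Suc.IH by blast
    show ?case
    proof (cases "even c")
      case False
      then obtain x where x: "[c * x = 1] (mod 2^n)"
        using cong_solve_coprime_nat[of c "2^n"] by auto
      have "R [^] x \<otimes> R [^] x = (R \<otimes> R) [^] x"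
        using Suc.prems(1) by (simp add: nat_pow_distrib)
      also have "\<dots> = Q [^] (c * x)"
        using Q by (simp add: c nat_pow_pow)
      also have "\<dots> = Q"
        using nat_pow_cong[OF Q Qn x] Q by simp
      finally show ?thesis using not_square Suc.prems(1) by auto
    next
      case True
      then obtain d where d: "c = 2 * d" by blast
      define W where "W = R \<otimes> inv (Q [^] d)"
      have W: "W \<in> carrier G" using Suc.prems(1) Q by (simp add: W_def)
      have "W \<otimes> W = (R \<otimes> R) \<otimes> inv (Q [^] d \<otimes> Q [^] d)"
        using Suc.prems(1) Q by (simp add: W_def inv_mult m_ac)
      also have "\<dots> = \<one>"
        using Q by (simp add: c d nat_pow_mult mult_2)
      finally have "W = \<one> \<or> W = T" using unique_involution W by auto
      moreover have "R = W \<otimes> Q [^] d"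
        using Suc.prems(1) Q by (simp add: W_def m_assoc)
      ultimately show ?thesis
        using Q by (auto simp: T nat_pow_mult)
    qed
  qed
qed

lemma (in comm_group) odd_pow_not_square:
  fixes m :: nat
  assumes P: "P \<in> carrier G" and not_square: "\<forall>R\<in>carrier G. R \<otimes> R \<noteq> P" and "odd m"
    and R: "R \<in> carrier G"
  shows "R \<otimes> R \<noteq> P [^] m"
proof
  assume RR: "R \<otimes> R = P [^] m"
  obtain i where m: "m = 2*i + 1" using \<open>odd m\<close> oddE by blast
  define V where "V = R \<otimes> inv (P [^] i)"
  have "m = Suc (i + i)" using m by simp
  then have Pm: "P [^] m = (P [^] i \<otimes> P [^] i) \<otimes> P"
    using P by (simp only: nat_pow_Suc nat_pow_mult[symmetric])
  have "V \<otimes> V = (R \<otimes> R) \<otimes> (inv (P [^] i) \<otimes> inv (P [^] i))"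
    using R P by (simp add: V_def m_ac)
  also have "\<dots> = P"
    using P by (simp add: RR Pm m_ac)
  finally show False using not_square R P by (simp add: V_def)
qed

section \<open>The curve y^2 = x^3 + s^2 x as an Edwards curve\<close>

locale edwards_model =
  fixes s k :: "'a::field"
  assumes nsq: "\<nexists>z::'a. z^2 = -1" and s_nonzero: "s \<noteq> 0" and k_square: "k^2 = 2*s"
begin

lemma two_nonzero: "(2::'a) \<noteq> 0"
  using nsq by (rule nonsquare_minus_one_imp_two_neq_zero)

lemma square_add_s_square_nonzero: "x^2 + s^2 \<noteq> 0"
  using s_nonzero sum_of_squares_eq_zero_iff[OF nsq] by simp

lemma on_curve_add_s_nonzero:
  assumes "on_curve (s^2) 0 (Aff x y)"
  shows "x + s \<noteq> 0"
proof
  assume "x + s = 0"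
  then have "x = -s" by (simp add: eq_neg_iff_add_eq_0)
  then have "y^2 + (k*s)^2 = 0"
    using assms k_square by (simp add: on_curve_Aff power2_eq_square power3_eq_cube algebra_simps)
  moreover have "k \<noteq> 0" using k_square s_nonzero two_nonzero by auto
  ultimately show False
    using s_nonzero sum_of_squares_eq_zero_iff[OF nsq] by simp
qed

(* An isomorphism onto the Edwards curve; it transports associativity, which is hard to
   check directly for the chord-tangent law. *)
definition to_edwards :: "'a ecpoint \<Rightarrow> 'a \<times> 'a" where
  "to_edwards P =
    (case P of Infty \<Rightarrow> (0, 1) | Aff x y \<Rightarrow> (k*y / (x^2 + s^2), (x - s) / (x + s)))"

lemma to_edwards_Aff: "to_edwards (Aff x y) = (k*y / (x^2 + s^2), (x - s) / (x + s))"
  and to_edwards_Infty: "to_edwards Infty = (0, 1)"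
  by (simp_all add: to_edwards_def)

lemma on_edwards_to_edwards:
  assumes "on_curve (s^2) 0 P"
  shows "on_edwards (to_edwards P)"
proof (cases P)
  case (Aff x y)
  with assms have "y^2 = x^3 + s^2*x" by (simp add: on_curve_Aff)
  with Aff square_add_s_square_nonzero[of x] on_curve_add_s_nonzero[of x y] assms k_square
  show ?thesis
    by (simp add: to_edwards_def field_simps)
      (simp add: algebra_simps power2_eq_square power3_eq_cube power4_eq_xxxx)
qed (simp add: to_edwards_def)

(* Writing a sum as (N / u^2, M / u^3) with N, M, u polynomial in the summands reduces the
   homomorphism property to the two polynomial identities cross_x and cross_y. *)
lemma to_edwards_Aff_eqI:
  fixes x1 y1 x2 y2 x3 y3 u N M :: 'a
  defines "B \<equiv> (x1^2 + s^2) * (x1 + s) * (x2^2 + s^2) * (x2 + s)"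
    and "K \<equiv> (k*y1) * (x1 - s) * (k*y2) * (x2 - s)"
  assumes on1: "on_curve (s^2) 0 (Aff x1 y1)" and on2: "on_curve (s^2) 0 (Aff x2 y2)"
    and on3: "on_curve (s^2) 0 (Aff x3 y3)"
    and u: "u \<noteq> 0" and x3: "x3 = N / u^2" and y3: "y3 = M / u^3"
    and cross_x: "k*M*u * (B - K) =
      ((k*y1) * (x2 - s) * (x1 + s) * (x2^2 + s^2) + (x1 - s) * (k*y2) * (x1^2 + s^2) * (x2 + s))
      * (N^2 + s^2*u^4)"
    and cross_y: "(N - s*u^2) * (B + K) =
      ((x1 - s) * (x2 - s) * (x1^2 + s^2) * (x2^2 + s^2) - (k*y1) * (k*y2) * (x1 + s) * (x2 + s))
      * (N + s*u^2)"
  shows "to_edwards (Aff x3 y3) = edwards_add (to_edwards (Aff x1 y1)) (to_edwards (Aff x2 y2))"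
proof -
  note nonzero = square_add_s_square_nonzero on_curve_add_s_nonzero[OF on1]
    on_curve_add_s_nonzero[OF on2] on_curve_add_s_nonzero[OF on3]
  have B: "B \<noteq> 0" using nonzero by (simp add: B_def)
  note on_edwards = on_edwards_to_edwards[OF on1, unfolded to_edwards_Aff]
    on_edwards_to_edwards[OF on2, unfolded to_edwards_Aff]
  have BK: "B - K \<noteq> 0" "B + K \<noteq> 0"
    using edwards_denominators_nonzero_fractions[OF nsq _ on_edwards] B
    by (simp_all add: B_def K_def ac_simps)
  have "edwards_add (to_edwards (Aff x1 y1)) (to_edwards (Aff x2 y2)) =
    (((k*y1) * (x2 - s) * (x1 + s) * (x2^2 + s^2) + (x1 - s) * (k*y2) * (x1^2 + s^2) * (x2 + s)) / (B - K),
     ((x1 - s) * (x2 - s) * (x1^2 + s^2) * (x2^2 + s^2) - (k*y1) * (k*y2) * (x1 + s) * (x2 + s)) / (B + K))"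
    using edwards_add_fractions[of "x1^2 + s^2" "x1 + s" "x2^2 + s^2" "x2 + s"
        "k*y1" "x1 - s" "k*y2" "x2 - s"] B
    by (simp add: to_edwards_Aff B_def K_def ac_simps)
  moreover have denom_x: "N^2 + s^2*u^4 = u^4 * (x3^2 + s^2)"
    and denom_y: "N + s*u^2 = u^2 * (x3 + s)" and numer_y: "N - s*u^2 = u^2 * (x3 - s)"
    using u by (simp_all add: x3 field_simps)
  have "to_edwards (Aff x3 y3) = (k*M*u / (N^2 + s^2*u^4), (N - s*u^2) / (N + s*u^2))"
    unfolding denom_x denom_y numer_y to_edwards_Aff y3
    using u nonzero(1)[of x3] nonzero(4) by (simp add: frac_eq_eq eval_nat_numeral)
  moreover have "N^2 + s^2*u^4 \<noteq> 0" "N + s*u^2 \<noteq> 0"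
    unfolding denom_x denom_y using u nonzero by simp_all
  ultimately show ?thesis
    using BK cross_x cross_y by (simp add: frac_eq_eq algebra_simps)
qed

lemma to_edwards_chord:
  assumes on1: "on_curve (s^2) 0 (Aff x1 y1)" and on2: "on_curve (s^2) 0 (Aff x2 y2)"
    and "x1 \<noteq> x2"
  shows "to_edwards (ec_add (s^2) (Aff x1 y1) (Aff x2 y2)) =
    edwards_add (to_edwards (Aff x1 y1)) (to_edwards (Aff x2 y2))"
proof -
  define u where "u = x2 - x1"
  define N where "N = (y2 - y1)^2 - (x1 + x2)*u^2"
  define M where "M = (y2 - y1)*(x1*u^2 - N) - y1*u^3"
  have u: "u \<noteq> 0" using \<open>x1 \<noteq> x2\<close> by (simp add: u_def)
  define l where "l = (y2 - y1) / (x2 - x1)"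
  have x3: "l^2 - x1 - x2 = N/u^2"
    using u by (simp add: l_def N_def flip: u_def) (simp add: field_simps)
  have y3: "l*(x1 - N/u^2) - y1 = M/u^3"
    using u by (simp add: l_def M_def flip: u_def) (simp add: field_simps, Groebner_Basis.algebra)
  have sum: "ec_add (s^2) (Aff x1 y1) (Aff x2 y2) = Aff (N/u^2) (M/u^3)"
    using \<open>x1 \<noteq> x2\<close> by (simp only: ec_add.simps if_False Let_def flip: l_def) (simp only: x3 y3)
  have h1: "y1^2 = x1^3 + s^2*x1" and h2: "y2^2 = x2^3 + s^2*x2"
    using on1 on2 by (simp_all add: on_curve_Aff)
  show ?thesis
    unfolding sum
  proof (rule to_edwards_Aff_eqI[OF on1 on2 _ u refl refl])
    show "on_curve (s^2) 0 (Aff (N/u^2) (M/u^3))"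
      using on_curve_ec_add[OF two_nonzero on1 on2] by (simp only: sum)
  qed (use h1 h2 k_square in \<open>simp only: u_def N_def M_def; Groebner_Basis.algebra\<close>)+
qed

lemma to_edwards_tangent:
  assumes on1: "on_curve (s^2) 0 (Aff x1 y1)" and "y1 \<noteq> 0"
  shows "to_edwards (ec_add (s^2) (Aff x1 y1) (Aff x1 y1)) =
    edwards_add (to_edwards (Aff x1 y1)) (to_edwards (Aff x1 y1))"
proof -
  define u where "u = 2*y1"
  define N where "N = (3*x1^2 + s^2)^2 - 2*x1*u^2"
  define M where "M = (3*x1^2 + s^2)*(x1*u^2 - N) - y1*u^3"
  have u: "u \<noteq> 0" using \<open>y1 \<noteq> 0\<close> two_nonzero by (simp add: u_def)
  define l where "l = (3*x1^2 + s^2) / (2*y1)"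
  have x3: "l^2 - 2*x1 = N/u^2"
    using u by (simp add: l_def N_def flip: u_def) (simp add: field_simps)
  have y3: "l*(x1 - N/u^2) - y1 = M/u^3"
    using u by (simp add: l_def M_def flip: u_def) (simp add: field_simps, Groebner_Basis.algebra)
  have sum: "ec_add (s^2) (Aff x1 y1) (Aff x1 y1) = Aff (N/u^2) (M/u^3)"
    by (simp only: ec_add_Aff_double[OF two_nonzero \<open>y1 \<noteq> 0\<close>] Let_def flip: l_def) (simp only: x3 y3)
  have h1: "y1^2 = x1^3 + s^2*x1"
    using on1 by (simp add: on_curve_Aff)
  show ?thesis
    unfolding sum
  proof (rule to_edwards_Aff_eqI[OF on1 on1 _ u refl refl])
    show "on_curve (s^2) 0 (Aff (N/u^2) (M/u^3))"
      using on_curve_ec_add[OF two_nonzero on1 on1] by (simp only: sum)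
  qed (use h1 k_square in \<open>simp only: u_def N_def M_def; Groebner_Basis.algebra\<close>)+
qed

lemma to_edwards_ec_add:
  assumes P: "on_curve (s^2) 0 P" and Q: "on_curve (s^2) 0 Q"
  shows "to_edwards (ec_add (s^2) P Q) = edwards_add (to_edwards P) (to_edwards Q)"
proof (cases P; cases Q)
  fix x1 y1 x2 y2 assume PQ: "P = Aff x1 y1" "Q = Aff x2 y2"
  consider "x1 \<noteq> x2" | "x2 = x1" "y2 = -y1" | "x2 = x1" "y2 = y1" "y1 \<noteq> 0"
    using on_curve_same_x[of "s^2" 0 x1 y1 y2] P Q PQ by fastforce
  then show ?thesis
  proof cases
    case 1
    from P Q this show ?thesis unfolding PQ by (rule to_edwards_chord)
  next
    case 2
    obtain X Y where XY: "to_edwards (Aff x1 y1) = (X, Y)" by fastforce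
    then have "to_edwards (Aff x1 (-y1)) = (-X, Y)" by (simp add: to_edwards_Aff)
    moreover have "on_edwards (X, Y)" using on_edwards_to_edwards[OF P] XY by (simp add: PQ)
    ultimately show ?thesis
      using edwards_add_neg[OF nsq] by (simp add: PQ 2 XY to_edwards_Infty)
  next
    case 3
    from P \<open>y1 \<noteq> 0\<close> show ?thesis unfolding PQ 3(1,2) by (rule to_edwards_tangent)
  qed
qed (simp_all add: to_edwards_Infty edwards_add_neutral)

lemma inj_on_to_edwards: "inj_on to_edwards (curve_points (s^2) 0)"
proof (rule inj_onI)
  fix P Q assume P: "P \<in> curve_points (s^2) 0" and Q: "Q \<in> curve_points (s^2) 0"
    and eq: "to_edwards P = to_edwards Q"
  have x_eq: "x1 = x2"
    if "x1 + s \<noteq> 0" "x2 + s \<noteq> 0" "(x1 - s) / (x1 + s) = (x2 - s) / (x2 + s)" for x1 x2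
  proof -
    from that have "2*s*(x1 - x2) = 0" by (simp add: frac_eq_eq algebra_simps)
    then show ?thesis using s_nonzero two_nonzero by simp
  qed
  have not_one: "(x - s) / (x + s) \<noteq> 1" if "x + s \<noteq> 0" for x
  proof
    assume "(x - s) / (x + s) = 1"
    with that have "2*s = 0" by (simp add: field_simps)
    with s_nonzero two_nonzero show False by simp
  qed
  show "P = Q"
  proof (cases P; cases Q)
    fix x1 y1 x2 y2 assume PQ: "P = Aff x1 y1" "Q = Aff x2 y2"
    have on: "on_curve (s^2) 0 (Aff x1 y1)" "on_curve (s^2) 0 (Aff x2 y2)"
      using P Q by (simp_all add: PQ curve_points_def)
    then have "x1 = x2"
      using eq x_eq on_curve_add_s_nonzero by (simp add: PQ to_edwards_Aff)
    moreover have "y1 = y2"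
      using eq square_add_s_square_nonzero[of x2] k_square s_nonzero two_nonzero
      by (auto simp: PQ to_edwards_Aff \<open>x1 = x2\<close>)
    ultimately show ?thesis by (simp add: PQ)
  qed (use eq P Q not_one on_curve_add_s_nonzero
      in \<open>auto simp: to_edwards_Aff to_edwards_Infty curve_points_def\<close>)
qed

lemma comm_group_ec_group: "comm_group (ec_group (s^2) 0)"
proof (rule comm_groupI, unfold ec_group_def partial_object.select_convs monoid.select_convs)
  let ?E = "curve_points (s^2) 0"
  have on: "on_curve (s^2) 0 P" if "P \<in> ?E" for P
    using that by (simp add: curve_points_def)
  have add_closed: "ec_add (s^2) P Q \<in> ?E" if "P \<in> ?E" "Q \<in> ?E" for P Q
    using on_curve_ec_add[OF two_nonzero on on] that by (simp add: curve_points_def)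
  have eqI: "P = Q" if "P \<in> ?E" "Q \<in> ?E" "to_edwards P = to_edwards Q" for P Q
    using inj_on_to_edwards that by (auto dest: inj_onD)
  show "ec_add (s^2) P Q \<in> ?E" if "P \<in> ?E" "Q \<in> ?E" for P Q
    using that by (rule add_closed)
  show "ec_add (s^2) (ec_add (s^2) P Q) R = ec_add (s^2) P (ec_add (s^2) Q R)"
    if "P \<in> ?E" "Q \<in> ?E" "R \<in> ?E" for P Q R
    using that
    by (intro eqI add_closed)
      (simp_all add: to_edwards_ec_add on add_closed edwards_add_assoc[OF nsq] on_edwards_to_edwards)
  show "ec_add (s^2) P Q = ec_add (s^2) Q P" if "P \<in> ?E" "Q \<in> ?E" for P Q
    using that by (intro eqI add_closed) (simp_all add: to_edwards_ec_add on edwards_add_commute)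
  show "\<exists>Q\<in>?E. ec_add (s^2) Q P = Infty" if "P \<in> ?E" for P
  proof (cases P)
    case (Aff x y)
    with that have "Aff x (-y) \<in> ?E" by (simp add: curve_points_def on_curve_def)
    then show ?thesis by (intro bexI[of _ "Aff x (-y)"]) (simp_all add: Aff)
  qed (intro bexI[of _ Infty], simp_all add: curve_points_def on_curve_def)
qed (simp_all add: curve_points_def on_curve_def)

lemma ec_add_self_neq_minus_one:
  assumes "on_curve (s^2) 0 V"
  shows "ec_add (s^2) V V \<noteq> Aff (-1) y"
  using ec_add_self_x_square[OF two_nonzero assms] nsq by metis

lemma ec_cyclic_eq_two_sylow:
  assumes Q: "Q \<in> curve_points (s^2) 0" and "ec_smult (s^2) (2^n) Q = Infty"
    and not_double: "\<forall>R\<in>curve_points (s^2) 0. ec_add (s^2) R R \<noteq> Q"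
  shows "ec_cyclic (s^2) Q = two_sylow (s^2) 0"
proof -
  let ?E = "ec_group (s^2) 0"
  interpret comm_group ?E by (rule comm_group_ec_group)
  have Q': "Q \<in> carrier ?E" using Q by (simp add: ec_group_def)
  have smult: "ec_smult (s^2) j R = R [^]\<^bsub>?E\<^esub> j" if "R \<in> carrier ?E" for j R
    using ec_smult_eq_nat_pow[OF monoid_axioms that] .
  have Qn: "Q [^]\<^bsub>?E\<^esub> (2::nat)^n = \<one>\<^bsub>?E\<^esub>"
    using assms(2) smult[OF Q'] by (simp add: ec_group_def)
  have involution: "\<forall>R\<in>carrier ?E.
      R \<otimes>\<^bsub>?E\<^esub> R = \<one>\<^bsub>?E\<^esub> \<longrightarrow> R = \<one>\<^bsub>?E\<^esub> \<or> R = Aff 0 0"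
    using ec_add_self_eq_Infty[OF two_nonzero] square_add_s_square_nonzero
    by (auto simp: ec_group_def curve_points_def eq_neg_iff_add_eq_0)
  show ?thesis
  proof (intro Set.set_eqI iffI)
    fix R assume "R \<in> ec_cyclic (s^2) Q"
    then obtain j :: nat where R: "R = Q [^]\<^bsub>?E\<^esub> j" by (auto simp: ec_cyclic_def smult[OF Q'])
    then have "R [^]\<^bsub>?E\<^esub> (2::nat)^n = (Q [^]\<^bsub>?E\<^esub> (2::nat)^n) [^]\<^bsub>?E\<^esub> j"
      using Q' by (simp add: nat_pow_pow mult.commute)
    then have "R [^]\<^bsub>?E\<^esub> (2::nat)^n = \<one>\<^bsub>?E\<^esub>"
      using Qn by simp
    moreover have R': "R \<in> carrier ?E" using R Q' by simp
    ultimately have "ec_smult (s^2) (2^n) R = Infty"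
      using smult[OF R'] by (simp add: ec_group_def)
    with R' show "R \<in> two_sylow (s^2) 0"
      by (auto simp: two_sylow_def ec_group_def)
  next
    fix R assume "R \<in> two_sylow (s^2) 0"
    then obtain e where R: "R \<in> carrier ?E" and "R [^]\<^bsub>?E\<^esub> (2::nat)^e = \<one>\<^bsub>?E\<^esub>"
      by (auto simp: two_sylow_def smult ec_group_def)
    then obtain j :: nat where "R = Q [^]\<^bsub>?E\<^esub> j"
      using two_power_element_in_powers[OF Q' Qn _ involution] not_double
      by (auto simp: ec_group_def)
    then show "R \<in> ec_cyclic (s^2) Q" by (auto simp: ec_cyclic_def smult[OF Q'])
  qed
qed

lemma ec_cyclic_odd_multiple_eq_two_sylow:
  fixes m n :: nat
  assumes "on_curve (s^2) 0 (Aff (-1) y)" and "odd m" and "card (curve_points (s^2) 0) = m * 2^n"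
  shows "ec_cyclic (s^2) (ec_smult (s^2) m (Aff (-1) y)) = two_sylow (s^2) 0"
proof -
  let ?E = "ec_group (s^2) 0"
  interpret comm_group ?E by (rule comm_group_ec_group)
  define P where "P = Aff (-1) y"
  have P: "P \<in> carrier ?E" using assms(1) by (simp add: P_def ec_group_def curve_points_def)
  have "order ?E = m * 2^n" using assms(3) by (simp add: order_def ec_group_def)
  then have "ec_smult (s^2) (2^n) (ec_smult (s^2) m P) = Infty"
    using pow_order_eq_1[OF P] P
    by (simp add: ec_smult_eq_nat_pow[OF monoid_axioms] nat_pow_pow) (simp add: ec_group_def)
  moreover have "ec_add (s^2) R R \<noteq> ec_smult (s^2) m P" if "R \<in> curve_points (s^2) 0" for R
    using odd_pow_not_square[OF P _ \<open>odd m\<close>] ec_add_self_neq_minus_one that P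
    by (simp add: ec_smult_eq_nat_pow[OF monoid_axioms] P_def) (simp add: ec_group_def curve_points_def)
  moreover have "ec_smult (s^2) m P \<in> carrier ?E"
    using P by (simp add: ec_smult_eq_nat_pow[OF monoid_axioms])
  ultimately show ?thesis
    unfolding P_def[symmetric] by (intro ec_cyclic_eq_two_sylow) (auto simp: ec_group_def)
qed

end

lemma two_power_mult_minus_one_mod_4:
  fixes m n :: nat
  assumes "m \<ge> 1" and "n > 1"
  shows "(m * 2^n - 1) mod 4 = 3"
proof -
  define j where "j = n - 2"
  have "n = j + 2" using \<open>n > 1\<close> by (simp add: j_def)
  then have "m * 2^n = 4 * (m * 2^j)" by (simp add: power_add)
  moreover have "m * 2^j \<ge> 1" using \<open>m \<ge> 1\<close> by simp
  ultimately have "m * 2^n - 1 = 4 * (m * 2^j - 1) + 3" by linarith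
  then show ?thesis by simp
qed

lemma obtain_edwards_model:
  fixes c :: "'a::{finite,field}"
  assumes nsq: "\<nexists>z::'a. z^2 = -1" and "c \<noteq> 0" and "\<nexists>z. z^2 = -c"
  obtains s k where "s^2 = c" and "edwards_model s k"
proof -
  obtain s where s: "s^2 = c" using square_or_neg_square[OF nsq, of c] assms(3) by blast
  with \<open>c \<noteq> 0\<close> have "s \<noteq> 0" by auto
  from square_or_neg_square[OF nsq, of "2*s"] obtain k where "k^2 = 2*s \<or> k^2 = 2*(-s)" by auto
  then show thesis
  proof
    assume "k^2 = 2*s"
    with s \<open>s \<noteq> 0\<close> nsq show thesis by (intro that[of s k]) (simp_all add: edwards_model_def)
  next
    assume "k^2 = 2*(-s)"
    with s \<open>s \<noteq> 0\<close> nsq show thesis by (intro that[of "-s" k]) (simp_all add: edwards_model_def)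
  qed
qed

theorem corollary1:
  fixes m n :: nat and t :: "'a::{finite,field}"
  assumes "odd m" and "m \<ge> 1" and "n > 1"
    and "prime (m * 2^n - 1)"
    and "CARD('a) = m * 2^n - 1"
    and "\<not> (\<exists>s::'a. s^2 = t^2 + 1)"
  shows "ec_cyclic (-(t^2 + 1)) (ec_smult (-(t^2 + 1)) m (Aff (-1) t))
           = two_sylow (-(t^2 + 1)) 0"
proof -
  have "CARD('a) mod 4 = 3" using two_power_mult_minus_one_mod_4[OF assms(2,3)] assms(5) by simp
  then have nsq: "\<nexists>z::'a. z^2 = -1" by (rule minus_one_not_square_if_CARD_mod_4)
  have "-(t^2 + 1) \<noteq> 0" using assms(6) by (metis neg_equal_0_iff_equal power_zero_numeral)
  then obtain s k where s: "s^2 = -(t^2 + 1)" and "edwards_model s k"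
    using obtain_edwards_model[OF nsq] assms(6) by (metis minus_minus)
  interpret edwards_model s k by fact
  have "on_curve (s^2) 0 (Aff (-1) t)" using s by (simp add: on_curve_def)
  moreover have "card (curve_points (s^2) 0) = m * 2^n"
    using card_curve_points[OF nsq] assms(2,5) by simp
  ultimately show ?thesis
    unfolding s[symmetric] by (rule ec_cyclic_odd_multiple_eq_two_sylow[OF _ \<open>odd m\<close>])
qed

end
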